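(* Let $n\ge t\ge 1$ be integers. The dimensions of the reduced homology groups of $\Omega^n_t$ do not depend on the ground field $\Bbbk$, and for every integer $p$, $$\dim_\Bbbk \widetilde{H}_p(\Omega^n_t;\Bbbk)=\begin{cases}\delta_{p+2,\frac{2n}{t+1}} & \text{if } n\equiv 0\pmod{t+1},\\ \delta_{p+3,\frac{2(n+1)}{t+1}} & \text{if } n\equiv t\pmod{t+1},\\ 0&\text{otherwise,}\end{cases}$$ where $\delta$ is the Kronecker delta.
   Context: For integers $n\ge t\ge 1$, $\Omega^n_t$ is the simplicial complex on vertex set $\{1,\dots,n\}$ whose facets are the sets $\{1,\dots,n\}\setminus\{i,i+1,\dots,i+t-1\}$ for $i=1,\dots,n-t+1$ (so $\Omega^t_t=\{\emptyset\}$, the irrelevant complex). $\widetilde{H}_p(\cdot;\Bbbk)$ denotes reduced simplicial homology over the field $\Bbbk$. *)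

theory Defs
  imports Complex_Main "HOL-Library.Function_Algebras"
begin

definition omega_facets :: "nat \<Rightarrow> nat \<Rightarrow> nat set set" where
  "omega_facets n t = {{1..n} - {i..i + t - 1} | i. 1 \<le> i \<and> i \<le> n - t + 1}"

definition omega :: "nat \<Rightarrow> nat \<Rightarrow> nat set set" where
  "omega n t = {\<sigma>. \<exists>F \<in> omega_facets n t. \<sigma> \<subseteq> F}"

text \<open>Simplicial chains (augmented, i.e. the empty face lives in degree -1) of a finite
  simplicial complex K on ordered vertices, with coefficients in a field 'k.\<close>

definition chains :: "nat set set \<Rightarrow> int \<Rightarrow> (nat set \<Rightarrow> 'k::field) set" where
  "chains K p = {c. \<forall>\<sigma>. c \<sigma> \<noteq> 0 \<longrightarrow> \<sigma> \<in> K \<and> int (card \<sigma>) = p + 1}"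

definition bsign :: "nat set \<Rightarrow> nat \<Rightarrow> 'k::field" where
  "bsign \<sigma> v = (-1) ^ card {u \<in> \<sigma>. u < v}"

definition boundary :: "nat set set \<Rightarrow> (nat set \<Rightarrow> 'k::field) \<Rightarrow> nat set \<Rightarrow> 'k" where
  "boundary K c \<tau> =
     (\<Sum>\<sigma> \<in> {\<sigma> \<in> K. \<tau> \<subseteq> \<sigma> \<and> card \<sigma> = Suc (card \<tau>)}. bsign \<sigma> (the_elem (\<sigma> - \<tau>)) * c \<sigma>)"

definition cycles :: "nat set set \<Rightarrow> int \<Rightarrow> (nat set \<Rightarrow> 'k::field) set" where
  "cycles K p = {c \<in> chains K p. boundary K c = 0}"

definition boundaries :: "nat set set \<Rightarrow> int \<Rightarrow> (nat set \<Rightarrow> 'k::field) set" where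
  "boundaries K p = boundary K ` chains K (p + 1)"

text \<open>dim of reduced homology H~_p(K; k) = dim Z_p - dim B_p (B_p is a subspace of Z_p).\<close>
definition red_homology_dim :: "'k::field itself \<Rightarrow> nat set set \<Rightarrow> int \<Rightarrow> nat" where
  "red_homology_dim TYPE('k) K p =
     vector_space.dim (\<lambda>(a::'k) c x. a * c x) (cycles K p :: (nat set \<Rightarrow> 'k) set)
     - vector_space.dim (\<lambda>(a::'k) c x. a * c x) (boundaries K p :: (nat set \<Rightarrow> 'k) set)"

end

theory Submission
  imports Defs
begin

text \<open>Algebraic discrete Morse theory.  A face of \<open>\<Omega>\<^sup>n\<^sub>t\<close> is a subset of \<open>{1..n}\<close> missing
  some \<open>t\<close> consecutive vertices.  Pair a face with the face obtained by toggling one vertex: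
  the vertex right after its first free window of length \<open>t\<close>, or, when that window ends at
  \<open>n\<close>, the least vertex \<open>\<equiv> 1 (mod t + 1)\<close> whose toggling keeps it there.  This matching
  is acyclic, witnessed by the weight \<open>\<Sum>x\<in>\<sigma>. 2 ^ x\<close>, so the boundaries of the
  upper faces of the pairs are linearly independent, and rank--nullity then leaves only the
  unmatched faces to carry homology.  There is at most one unmatched face: it consists of both
  ends of every block of \<open>t + 1\<close> consecutive vertices before \<open>n - t\<close>, together with \<open>n - t\<close>,
  and it is unmatched exactly when \<open>n \<equiv> 0\<close> or \<open>n \<equiv> t (mod t + 1)\<close>; its size gives the degree.\<close>

section \<open>Chains with coefficients in a field\<close>

interpretation chain: vector_space "\<lambda>(a::'k::field) (c::nat set \<Rightarrow> 'k) x. a * c x"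
  by unfold_locales (auto simp: fun_eq_iff algebra_simps)

lemma sum_fun_apply: "(\<Sum>x\<in>A. f x) r = (\<Sum>x\<in>A. f x r)"
  by (induction A rule: infinite_finite_induct) auto

lemma independent_card_le_dim_span:
  assumes "I \<subseteq> T" "chain.independent I" "T \<subseteq> chain.span E" "finite E"
  shows "card (I :: (nat set \<Rightarrow> 'k::field) set) \<le> chain.dim T"
proof -
  obtain B where B: "B \<subseteq> T" "chain.independent B" "T \<subseteq> chain.span B" "card B = chain.dim T"
    using chain.basis_exists by blast
  have fB: "finite B"
    using chain.independent_span_bound[OF assms(4) B(2)] B(1) assms(3) by auto
  have "I \<subseteq> chain.span B" using assms(1) B(3) by auto
  then show ?thesis using chain.independent_span_bound[OF fB assms(2)] B(4) by simp
qed

lemma dim_le_dim_if_subset: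
  assumes "S \<subseteq> T" "T \<subseteq> chain.span E" "finite E"
  shows "chain.dim (S :: (nat set \<Rightarrow> 'k::field) set) \<le> chain.dim T"
proof -
  obtain A where A: "A \<subseteq> S" "chain.independent A" "S \<subseteq> chain.span A" "card A = chain.dim S"
    using chain.basis_exists by blast
  have "A \<subseteq> T" using A(1) assms(1) by (rule order_trans)
  from independent_card_le_dim_span[OF this A(2) assms(2,3)] show ?thesis unfolding A(4) .
qed

lemma span_Int_span_diff_eq_0:
  assumes ind: "chain.independent (B :: (nat set \<Rightarrow> 'k::field) set)" and fin: "finite B" and AB: "A \<subseteq> B"
    and x1: "x \<in> chain.span A" and x2: "x \<in> chain.span (B - A)"
  shows "x = 0"
proof -
  have fA: "finite A" using fin AB finite_subset by auto
  obtain u where u: "x = (\<Sum>v\<in>A. (\<lambda>r. u v * v r))" using x1 chain.span_finite[OF fA] by auto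
  obtain w where w: "x = (\<Sum>v\<in>B-A. (\<lambda>r. w v * v r))" using x2 chain.span_finite[of "B - A"] fin by auto
  define c where "c v = (if v \<in> A then u v else - w v)" for v
  have "(\<Sum>v\<in>B. (\<lambda>r. c v * v r)) = (\<Sum>v\<in>A. (\<lambda>r. c v * v r)) + (\<Sum>v\<in>B-A. (\<lambda>r. c v * v r))"
    using fin AB by (metis (no_types, lifting) sum.subset_diff add.commute)
  also have "(\<Sum>v\<in>A. (\<lambda>r. c v * v r)) = x" unfolding u by (rule sum.cong) (auto simp: c_def)
  also have "(\<Sum>v\<in>B-A. (\<lambda>r. c v * v r)) = - x" unfolding w
    by (simp add: c_def sum_negf[symmetric] fun_eq_iff sum_fun_apply)
  finally have "(\<Sum>v\<in>B. (\<lambda>r. c v * v r)) = 0" by (simp add: fun_eq_iff)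
  then have "\<forall>v\<in>B. c v = 0" using chain.independentD[OF ind fin order_refl] by blast
  then have "\<forall>v\<in>A. u v = 0" using AB unfolding c_def by (metis subsetD)
  then show "x = 0" unfolding u by (simp add: fun_eq_iff sum_fun_apply)
qed

lemma image_span_eq_span_image_diff:
  fixes f :: "(nat set \<Rightarrow> 'k::field) \<Rightarrow> (nat set \<Rightarrow> 'k)"
  assumes hom: "module_hom (\<lambda>a c x. a * c x) (\<lambda>a c x. a * c x) f"
    and "A \<subseteq> B" and zero: "\<And>a. a \<in> A \<Longrightarrow> f a = 0"
  shows "f ` chain.span B = chain.span (f ` (B - A))"
proof -
  have "f ` B \<subseteq> chain.span (f ` (B - A))"
  proof
    fix y assume "y \<in> f ` B"
    then obtain b where b: "b \<in> B" "y = f b" by auto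
    show "y \<in> chain.span (f ` (B - A))"
    proof (cases "b \<in> A")
      case True then show ?thesis using b zero chain.span_zero by simp
    next
      case False then show ?thesis using b by (auto intro: chain.span_base)
    qed
  qed
  then have "chain.span (f ` B) = chain.span (f ` (B - A))"
    by (intro subset_antisym) (simp_all add: chain.span_minimal chain.span_mono image_mono)
  then show ?thesis using module_hom.span_image[OF hom, of B] by simp
qed

text \<open>Rank--nullity on the span of a finite set; the ambient function space is not
  finite-dimensional, so the library version does not apply.\<close>

lemma dim_kernel_add_dim_image:
  fixes f :: "(nat set \<Rightarrow> 'k::field) \<Rightarrow> (nat set \<Rightarrow> 'k)"
  assumes hom: "module_hom (\<lambda>a c x. a * c x) (\<lambda>a c x. a * c x) f"
    and fin: "finite E"
  shows "chain.dim (chain.span E \<inter> {x. f x = 0}) + chain.dim (f ` chain.span E) = chain.dim (chain.span E)"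
proof -
  let ?W = "chain.span E"
  let ?N = "?W \<inter> {x. f x = 0}"
  obtain A where A: "A \<subseteq> ?N" "chain.independent A" "?N \<subseteq> chain.span A" "card A = chain.dim ?N"
    using chain.basis_exists by blast
  obtain B where B: "A \<subseteq> B" "B \<subseteq> ?W" "chain.independent B" "?W \<subseteq> chain.span B"
    using chain.maximal_independent_subset_extend[of A ?W] A by auto
  have fB: "finite B" using chain.independent_span_bound[OF fin B(3)] B(2) by auto
  have spB: "chain.span B = ?W"
    using B chain.span_mono[OF B(2)] by (simp add: chain.span_span subset_antisym)
  have dW: "chain.dim ?W = card B" using chain.dim_eq_card[OF spB B(3)] by simp
  have inj: "inj_on f (chain.span (B - A))"
  proof (subst module_hom.inj_on_iff_eq_0[OF hom], simp, intro ballI impI)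
    fix x assume x: "x \<in> chain.span (B - A)" "f x = 0"
    have "x \<in> ?W" using x(1) chain.span_mono[of "B - A" B] spB by auto
    then have "x \<in> chain.span A" using x(2) A(3) by auto
    then show "x = 0" using span_Int_span_diff_eq_0[OF B(3) fB B(1)] x(1) by blast
  qed
  have im: "f ` ?W = chain.span (f ` (B - A))"
    using image_span_eq_span_image_diff[OF hom B(1)] A(1) spB by auto
  have indim: "chain.independent (f ` (B - A))"
    using module_hom.independent_injective_image[OF hom chain.independent_mono[OF B(3)] inj] by auto
  have "chain.dim (f ` ?W) = card (f ` (B - A))"
    unfolding im chain.dim_span by (rule chain.dim_eq_card_independent[OF indim])
  also have "\<dots> = card (B - A)"
    using card_image inj_on_subset[OF inj chain.span_superset] by blast
  also have "\<dots> = card B - card A" using fB B(1) by (simp add: card_Diff_subset finite_subset)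
  finally show ?thesis using A(4) dW card_mono[OF fB B(1)] by simp
qed

lemma module_hom_boundary:
  "module_hom (\<lambda>(a::'k::field) (c::nat set \<Rightarrow> 'k) x. a * c x) (\<lambda>a c x. a * c x) (boundary K)"
  unfolding module_hom_iff
  by (auto simp: chain.module_axioms boundary_def fun_eq_iff sum.distrib sum_distrib_left algebra_simps)

lemma bsign_nonzero: "(bsign s v :: 'k::field) \<noteq> 0"
  by (simp add: bsign_def)

lemma bsign_swap_cancel:
  assumes fr: "finite r" and ab: "a < b" and a: "a \<notin> r" and b: "b \<notin> r"
  shows "(bsign (insert a r) a * bsign (insert a (insert b r)) b :: 'k::field)
       + bsign (insert b r) b * bsign (insert a (insert b r)) a = 0"
proof -
  have e1: "{u \<in> insert a r. u < a} = {u\<in>r. u < a}" by auto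
  have e2: "{u \<in> insert b r. u < b} = {u\<in>r. u < b}" by auto
  have "{u \<in> insert a (insert b r). u < b} = insert a {u\<in>r. u < b}" using ab by auto
  then have e3: "card {u \<in> insert a (insert b r). u < b} = Suc (card {u\<in>r. u < b})"
    using fr a by simp
  have e4: "{u \<in> insert a (insert b r). u < a} = {u\<in>r. u < a}" using ab by auto
  show ?thesis unfolding bsign_def e1 e2 e3 e4 by simp
qed

definition unit_chain :: "nat set \<Rightarrow> nat set \<Rightarrow> 'k::field" where
  "unit_chain \<sigma> = (\<lambda>\<tau>. if \<tau> = \<sigma> then 1 else 0)"

lemma inj_unit_chain: "inj (unit_chain :: nat set \<Rightarrow> nat set \<Rightarrow> 'k::field)"
  by (rule injI) (metis unit_chain_def one_neq_zero)

lemma independent_unit_chains: "chain.independent ((unit_chain :: nat set \<Rightarrow> nat set \<Rightarrow> 'k::field) ` F)"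
  unfolding chain.independent_explicit_module
proof (intro allI impI)
  fix T u v
  assume T: "finite T" "T \<subseteq> (unit_chain :: nat set \<Rightarrow> nat set \<Rightarrow> 'k::field) ` F"
    and s: "(\<Sum>v\<in>T. (\<lambda>x. u v * v x)) = 0" and v: "v \<in> T"
  from v T obtain \<sigma> where \<sigma>: "v = unit_chain \<sigma>" by auto
  have "(\<Sum>w\<in>T. u w * w \<sigma>) = (\<Sum>w\<in>T. if w = v then u w else 0)"
  proof (rule sum.cong[OF refl])
    fix w assume "w \<in> T"
    then obtain \<rho> where \<rho>: "w = unit_chain \<rho>" using T by auto
    show "u w * w \<sigma> = (if w = v then u w else 0)"
      using \<sigma> \<rho> inj_unit_chain[THEN injD, of \<rho> \<sigma>] by (auto simp: unit_chain_def)
  qed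
  also have "\<dots> = u v" using T v by simp
  finally show "u v = 0" using fun_cong[OF s, of \<sigma>] by (simp add: sum_fun_apply)
qed

definition faces :: "nat set set \<Rightarrow> int \<Rightarrow> nat set set" where
  "faces K p = {\<sigma> \<in> K. int (card \<sigma>) = p + 1}"

definition cofacets :: "nat set set \<Rightarrow> nat set \<Rightarrow> nat set set" where
  "cofacets K \<tau> = {\<sigma> \<in> K. \<tau> \<subseteq> \<sigma> \<and> card \<sigma> = Suc (card \<tau>)}"

lemma boundary_eq_sum_cofacets:
  "boundary K c \<tau> = (\<Sum>\<sigma>\<in>cofacets K \<tau>. bsign \<sigma> (the_elem (\<sigma> - \<tau>)) * c \<sigma>)"
  by (simp add: boundary_def cofacets_def)

lemma obtain_codim_two:
  fixes \<sigma> \<rho> :: "'a::linorder set"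
  assumes "finite \<sigma>" "\<rho> \<subseteq> \<sigma>" "card \<sigma> = Suc (Suc (card \<rho>))"
  obtains a b where "a < b" "a \<notin> \<rho>" "b \<notin> \<rho>" "\<sigma> = insert a (insert b \<rho>)"
proof -
  have "card (\<sigma> - \<rho>) = 2"
    using assms card_Diff_subset[OF finite_subset[OF assms(2,1)] assms(2)] by simp
  then obtain a b where ab0: "\<sigma> - \<rho> = {a, b}" "a \<noteq> b" by (meson card_2_iff)
  obtain a b where ab: "\<sigma> - \<rho> = {a, b}" "a < b"
  proof (cases "a < b")
    case True then show ?thesis using ab0 that by blast
  next
    case False then have "b < a" using ab0(2) by simp
    moreover have "\<sigma> - \<rho> = {b, a}" using ab0 by blast
    ultimately show ?thesis using that by blast
  qed
  moreover have "a \<notin> \<rho>" "b \<notin> \<rho>" using ab(1) by auto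
  moreover have "\<sigma> = insert a (insert b \<rho>)" using ab(1) assms(2) by auto
  ultimately show ?thesis using that by simp
qed

section \<open>Finite simplicial complexes\<close>

locale finite_complex =
  fixes K :: "nat set set"
  assumes finite_K: "finite K"
    and finite_face: "\<And>\<sigma>. \<sigma> \<in> K \<Longrightarrow> finite \<sigma>"
    and face_subset: "\<And>\<sigma> \<tau>. \<sigma> \<in> K \<Longrightarrow> \<tau> \<subseteq> \<sigma> \<Longrightarrow> \<tau> \<in> K"
begin

lemma chains_eq_span_unit_chains:
  "chains K p = chain.span ((unit_chain :: nat set \<Rightarrow> nat set \<Rightarrow> 'k::field) ` faces K p)"
proof
  have fin: "finite (faces K p)" using finite_K by (simp add: faces_def)
  show "chains K p \<subseteq> chain.span ((unit_chain :: nat set \<Rightarrow> nat set \<Rightarrow> 'k::field) ` faces K p)"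
  proof
    fix c :: "nat set \<Rightarrow> 'k" assume c: "c \<in> chains K p"
    have "c = (\<Sum>\<sigma>\<in>faces K p. (\<lambda>x. c \<sigma> * unit_chain \<sigma> x))"
    proof
      fix \<tau>
      have "(\<Sum>\<sigma>\<in>faces K p. (\<lambda>x. c \<sigma> * unit_chain \<sigma> x)) \<tau> = (\<Sum>\<sigma>\<in>faces K p. if \<sigma> = \<tau> then c \<tau> else 0)"
        unfolding sum_fun_apply by (rule sum.cong) (auto simp: unit_chain_def)
      also have "\<dots> = c \<tau>" using c fin by (auto simp: chains_def faces_def)
      finally show "c \<tau> = (\<Sum>\<sigma>\<in>faces K p. (\<lambda>x. c \<sigma> * unit_chain \<sigma> x)) \<tau>" by simp
    qed
    also have "\<dots> \<in> chain.span (unit_chain ` faces K p)"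
      by (intro chain.span_sum chain.span_scale chain.span_base) auto
    finally show "c \<in> chain.span (unit_chain ` faces K p)" .
  qed
  have "chain.subspace (chains K p :: (nat set \<Rightarrow> 'k) set)"
  proof -
    have nz: "x \<sigma> + y \<sigma> \<noteq> 0 \<Longrightarrow> x \<sigma> \<noteq> 0 \<or> y \<sigma> \<noteq> 0" for x y :: "nat set \<Rightarrow> 'k" and \<sigma> by auto
    show ?thesis unfolding chain.subspace_def chains_def by (auto dest!: nz)
  qed
  moreover have "(unit_chain :: nat set \<Rightarrow> nat set \<Rightarrow> 'k::field) ` faces K p \<subseteq> chains K p"
    by (auto simp: chains_def faces_def unit_chain_def split: if_splits)
  ultimately show "chain.span ((unit_chain :: nat set \<Rightarrow> nat set \<Rightarrow> 'k::field) ` faces K p) \<subseteq> chains K p"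
    by (rule chain.span_minimal[rotated])
qed

lemma dim_chains: "chain.dim (chains K p :: (nat set \<Rightarrow> 'k::field) set) = card (faces K p)"
  unfolding chains_eq_span_unit_chains
  by (simp add: chain.dim_eq_card_independent independent_unit_chains card_image inj_on_subset[OF inj_unit_chain])

lemma boundary_in_chains:
  assumes c: "c \<in> chains K (p + 1)"
  shows "boundary K c \<in> chains K p"
  unfolding chains_def mem_Collect_eq
proof (intro allI impI)
  fix \<tau> assume "boundary K c \<tau> \<noteq> 0"
  then have "\<exists>\<sigma>\<in>cofacets K \<tau>. bsign \<sigma> (the_elem (\<sigma> - \<tau>)) * c \<sigma> \<noteq> 0"
    unfolding boundary_eq_sum_cofacets by (meson sum.neutral)
  then obtain \<sigma> where "\<sigma> \<in> cofacets K \<tau>" "c \<sigma> \<noteq> 0" by auto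
  then show "\<tau> \<in> K \<and> int (card \<tau>) = p + 1" using c face_subset by (auto simp: chains_def cofacets_def)
qed

lemma cofacets_between:
  assumes \<sigma>: "\<sigma> = insert a (insert b \<rho>)" "\<sigma> \<in> K" and ab: "a \<noteq> b" "a \<notin> \<rho>" "b \<notin> \<rho>"
  shows "{\<tau> \<in> cofacets K \<rho>. \<sigma> \<in> cofacets K \<tau>} = {insert a \<rho>, insert b \<rho>}"
proof (rule set_eqI, rule iffI)
  have fr: "finite \<rho>" using finite_face[OF \<sigma>(2)] \<sigma>(1) by simp
  fix \<tau> assume "\<tau> \<in> {\<tau> \<in> cofacets K \<rho>. \<sigma> \<in> cofacets K \<tau>}"
  then have t: "\<rho> \<subseteq> \<tau>" "\<tau> \<subseteq> \<sigma>" "card \<tau> = Suc (card \<rho>)" by (auto simp: cofacets_def)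
  then have "card (\<tau> - \<rho>) = 1" using card_Diff_subset[OF fr t(1)] by simp
  then obtain x where x: "\<tau> - \<rho> = {x}" by (meson card_1_singletonE)
  then show "\<tau> \<in> {insert a \<rho>, insert b \<rho>}" using t \<sigma>(1) by auto
next
  have fr: "finite \<rho>" using finite_face[OF \<sigma>(2)] \<sigma>(1) by simp
  fix \<tau> assume "\<tau> \<in> {insert a \<rho>, insert b \<rho>}"
  then obtain x y where xy: "\<tau> = insert x \<rho>" "\<sigma> = insert y \<tau>" "x \<notin> \<rho>" "y \<notin> \<tau>"
    using \<sigma>(1) ab by blast
  then show "\<tau> \<in> {\<tau> \<in> cofacets K \<rho>. \<sigma> \<in> cofacets K \<tau>}"
    using fr face_subset[OF \<sigma>(2), of \<tau>] \<sigma>(2) by (simp add: cofacets_def subset_insertI)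
qed

lemma boundary_boundary: "boundary K (boundary K c) = (0 :: nat set \<Rightarrow> 'k::field)"
proof
  fix \<rho>
  let ?g = "\<lambda>\<tau> \<sigma>. bsign \<tau> (the_elem (\<tau> - \<rho>)) * (bsign \<sigma> (the_elem (\<sigma> - \<tau>)) * (c \<sigma> :: 'k))"
  have fin: "finite (cofacets K \<tau>)" for \<tau> using finite_K by (simp add: cofacets_def)
  have "boundary K (boundary K c) \<rho> = (\<Sum>\<tau>\<in>cofacets K \<rho>. \<Sum>\<sigma>\<in>{\<sigma>\<in>K. \<sigma> \<in> cofacets K \<tau>}. ?g \<tau> \<sigma>)"
    unfolding boundary_eq_sum_cofacets sum_distrib_left
    by (intro sum.cong refl) (auto simp: cofacets_def)
  also have "\<dots> = (\<Sum>\<sigma>\<in>K. \<Sum>\<tau>\<in>{\<tau>\<in>cofacets K \<rho>. \<sigma> \<in> cofacets K \<tau>}. ?g \<tau> \<sigma>)"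
    by (rule sum.swap_restrict) (use finite_K fin in auto)
  also have "\<dots> = 0"
  proof (rule sum.neutral, intro ballI)
    fix \<sigma> assume \<sigma>: "\<sigma> \<in> K"
    show "(\<Sum>\<tau>\<in>{\<tau>\<in>cofacets K \<rho>. \<sigma> \<in> cofacets K \<tau>}. ?g \<tau> \<sigma>) = 0"
    proof (cases "\<rho> \<subseteq> \<sigma> \<and> card \<sigma> = Suc (Suc (card \<rho>))")
      case False
      then have "{\<tau>\<in>cofacets K \<rho>. \<sigma> \<in> cofacets K \<tau>} = {}" by (auto simp: cofacets_def)
      then show ?thesis by (simp only: sum.empty)
    next
      case True
      then obtain a b where ab: "a < b" "a \<notin> \<rho>" "b \<notin> \<rho>" and \<sigma>_eq: "\<sigma> = insert a (insert b \<rho>)"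
        using obtain_codim_two finite_face[OF \<sigma>] by metis
      have fr: "finite \<rho>" using finite_face[OF \<sigma>] \<sigma>_eq by simp
      have "insert a \<rho> \<noteq> insert b \<rho>" using ab by auto
      then have "(\<Sum>\<tau>\<in>{\<tau>\<in>cofacets K \<rho>. \<sigma> \<in> cofacets K \<tau>}. ?g \<tau> \<sigma>) = ?g (insert a \<rho>) \<sigma> + ?g (insert b \<rho>) \<sigma>"
        unfolding cofacets_between[OF \<sigma>_eq \<sigma> less_imp_neq[OF ab(1)] ab(2,3)] by simp
      moreover have "insert a \<rho> - \<rho> = {a}" "insert b \<rho> - \<rho> = {b}" using ab by auto
      moreover have "\<sigma> - insert a \<rho> = {b}" "\<sigma> - insert b \<rho> = {a}" using ab \<sigma>_eq by auto
      ultimately have "(\<Sum>\<tau>\<in>{\<tau>\<in>cofacets K \<rho>. \<sigma> \<in> cofacets K \<tau>}. ?g \<tau> \<sigma>)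
          = (bsign (insert a \<rho>) a * bsign \<sigma> b + bsign (insert b \<rho>) b * bsign \<sigma> a) * c \<sigma>"
        by (simp add: algebra_simps)
      also have "\<dots> = 0" unfolding \<sigma>_eq using bsign_swap_cancel[OF fr ab, where 'k='k] by simp
      finally show ?thesis .
    qed
  qed
  finally show "boundary K (boundary K c) \<rho> = 0 \<rho>" by simp
qed

lemma boundary_unit_chain:
  "boundary K (unit_chain \<sigma> :: nat set \<Rightarrow> 'k::field) \<tau> =
   (if \<sigma> \<in> cofacets K \<tau> then bsign \<sigma> (the_elem (\<sigma> - \<tau>)) else 0)"
proof -
  have "boundary K (unit_chain \<sigma> :: nat set \<Rightarrow> 'k) \<tau> =
      (\<Sum>\<rho>\<in>cofacets K \<tau>. if \<rho> = \<sigma> then bsign \<rho> (the_elem (\<rho> - \<tau>)) else 0)"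
    unfolding boundary_eq_sum_cofacets by (rule sum.cong) (auto simp: unit_chain_def)
  also have "\<dots> = (if \<sigma> \<in> cofacets K \<tau> then bsign \<sigma> (the_elem (\<sigma> - \<tau>)) else 0)"
    using finite_K by (simp add: sum.delta' cofacets_def)
  finally show ?thesis .
qed

lemma dim_cycles_add_dim_boundaries:
  "chain.dim (cycles K p :: (nat set \<Rightarrow> 'k::field) set) + chain.dim (boundaries K (p - 1) :: (nat set \<Rightarrow> 'k) set)
   = card (faces K p)"
proof -
  let ?E = "(unit_chain :: nat set \<Rightarrow> nat set \<Rightarrow> 'k) ` faces K p"
  have "finite ?E" using finite_K by (simp add: faces_def)
  moreover have "cycles K p = chain.span ?E \<inter> {x. boundary K x = 0}"
    unfolding cycles_def chains_eq_span_unit_chains[symmetric] by auto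
  moreover have "boundaries K (p - 1) = boundary K ` chain.span ?E"
    unfolding boundaries_def chains_eq_span_unit_chains[symmetric] by simp
  ultimately show ?thesis
    using dim_kernel_add_dim_image[OF module_hom_boundary, of ?E K] dim_chains[of p, where 'k='k]
    unfolding chains_eq_span_unit_chains by simp
qed

lemma dim_boundaries_le_dim_cycles:
  "chain.dim (boundaries K p :: (nat set \<Rightarrow> 'k::field) set) \<le> chain.dim (cycles K p :: (nat set \<Rightarrow> 'k) set)"
proof (rule dim_le_dim_if_subset)
  show "boundaries K p \<subseteq> (cycles K p :: (nat set \<Rightarrow> 'k) set)"
    unfolding boundaries_def cycles_def using boundary_in_chains boundary_boundary by auto
  show "cycles K p \<subseteq> chain.span ((unit_chain :: nat set \<Rightarrow> nat set \<Rightarrow> 'k::field) ` faces K p)"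
    using chains_eq_span_unit_chains unfolding cycles_def by auto
  show "finite ((unit_chain :: nat set \<Rightarrow> nat set \<Rightarrow> 'k::field) ` faces K p)"
    using finite_K by (simp add: faces_def)
qed

end

text \<open>In a vanishing combination of a triangular family, the term of least weight with nonzero
  coefficient is the only one contributing at its pivot face \<open>r \<tau>\<close>.\<close>

lemma triangular_combination_eq_0:
  fixes h :: "'a \<Rightarrow> nat set \<Rightarrow> 'k::field" and r :: "'a \<Rightarrow> nat set" and w :: "'a \<Rightarrow> nat"
  assumes fin: "finite U"
    and diag: "\<And>\<tau>. \<tau> \<in> U \<Longrightarrow> h \<tau> (r \<tau>) \<noteq> 0"
    and tri: "\<And>\<tau> \<tau>'. \<tau> \<in> U \<Longrightarrow> \<tau>' \<in> U \<Longrightarrow> \<tau> \<noteq> \<tau>' \<Longrightarrow> h \<tau> (r \<tau>') \<noteq> 0 \<Longrightarrow> w \<tau> < w \<tau>'"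
    and comb: "(\<Sum>\<tau>\<in>U. (\<lambda>x. g \<tau> * h \<tau> x)) = 0"
  shows "\<forall>\<tau>\<in>U. g \<tau> = 0"
proof (rule ccontr)
  let ?Z = "{\<tau>\<in>U. g \<tau> \<noteq> 0}"
  assume "\<not> (\<forall>\<tau>\<in>U. g \<tau> = 0)"
  then have "w ` ?Z \<noteq> {}" by auto
  moreover have finZ: "finite (w ` ?Z)" using fin by simp
  ultimately have "Min (w ` ?Z) \<in> w ` ?Z" by (rule Min_in[rotated])
  then obtain \<tau>0 where "\<tau>0 \<in> ?Z" "w \<tau>0 = Min (w ` ?Z)" by auto
  then have \<tau>0: "\<tau>0 \<in> ?Z" "\<And>\<tau>. \<tau> \<in> ?Z \<Longrightarrow> w \<tau>0 \<le> w \<tau>"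
    using Min_le[OF finZ] by auto
  have "(\<Sum>\<tau>\<in>U - {\<tau>0}. g \<tau> * h \<tau> (r \<tau>0)) = 0"
  proof (rule sum.neutral, rule ballI, rule ccontr)
    fix \<tau> assume \<tau>: "\<tau> \<in> U - {\<tau>0}" "g \<tau> * h \<tau> (r \<tau>0) \<noteq> 0"
    then have "w \<tau> < w \<tau>0" using tri[of \<tau> \<tau>0] \<tau>0(1) by auto
    moreover have "w \<tau>0 \<le> w \<tau>" using \<tau> \<tau>0(2) by auto
    ultimately show False by simp
  qed
  moreover have "0 = (\<Sum>\<tau>\<in>U. g \<tau> * h \<tau> (r \<tau>0))"
    using fun_cong[OF comb, of "r \<tau>0"] by (simp add: sum_fun_apply)
  ultimately have "g \<tau>0 * h \<tau>0 (r \<tau>0) = 0"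
    using sum.remove[OF fin, of \<tau>0 "\<lambda>\<tau>. g \<tau> * h \<tau> (r \<tau>0)"] \<tau>0(1) by simp
  then show False using \<tau>0(1) diag by simp
qed

lemma triangular_inj_on:
  fixes h :: "'a \<Rightarrow> nat set \<Rightarrow> 'k::field" and r :: "'a \<Rightarrow> nat set" and w :: "'a \<Rightarrow> nat"
  assumes diag: "\<And>\<tau>. \<tau> \<in> U \<Longrightarrow> h \<tau> (r \<tau>) \<noteq> 0"
    and tri: "\<And>\<tau> \<tau>'. \<tau> \<in> U \<Longrightarrow> \<tau>' \<in> U \<Longrightarrow> \<tau> \<noteq> \<tau>' \<Longrightarrow> h \<tau> (r \<tau>') \<noteq> 0 \<Longrightarrow> w \<tau> < w \<tau>'"
  shows "inj_on h U"
proof (rule inj_onI, rule ccontr)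
  fix a b assume ab: "a \<in> U" "b \<in> U" "h a = h b" "a \<noteq> b"
  then have "w b < w a" using tri[of b a] diag[of a] by simp
  moreover have "w a < w b" using ab tri[of a b] diag[of b] by simp
  ultimately show False by simp
qed

lemma triangular_independent:
  fixes h :: "'a \<Rightarrow> nat set \<Rightarrow> 'k::field" and r :: "'a \<Rightarrow> nat set" and w :: "'a \<Rightarrow> nat"
  assumes fin: "finite U"
    and diag: "\<And>\<tau>. \<tau> \<in> U \<Longrightarrow> h \<tau> (r \<tau>) \<noteq> 0"
    and tri: "\<And>\<tau> \<tau>'. \<tau> \<in> U \<Longrightarrow> \<tau>' \<in> U \<Longrightarrow> \<tau> \<noteq> \<tau>' \<Longrightarrow> h \<tau> (r \<tau>') \<noteq> 0 \<Longrightarrow> w \<tau> < w \<tau>'"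
  shows "chain.independent (h ` U)"
  unfolding chain.independent_explicit_module
proof (intro allI impI)
  fix T u v
  assume T: "finite T" "T \<subseteq> h ` U" and s: "(\<Sum>v\<in>T. (\<lambda>x. u v * v x)) = 0" and v: "v \<in> T"
  define U' where "U' = {\<tau>\<in>U. h \<tau> \<in> T}"
  have TU: "T = h ` U'" using T by (auto simp: U'_def)
  have inj: "inj_on h U'"
    using triangular_inj_on[of U h r w, OF diag tri] by (rule inj_on_subset) (auto simp: U'_def)
  define g where "g \<tau> = (if \<tau> \<in> U' then u (h \<tau>) else 0)" for \<tau>
  have "(\<Sum>\<tau>\<in>U. (\<lambda>x. g \<tau> * h \<tau> x)) = (\<Sum>\<tau>\<in>U'. (\<lambda>x. u (h \<tau>) * h \<tau> x))"
    using fin by (intro sum.mono_neutral_cong_right) (auto simp: U'_def g_def fun_eq_iff)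
  also have "\<dots> = (\<Sum>v\<in>T. (\<lambda>x. u v * v x))"
    unfolding TU by (rule sum.reindex[OF inj, symmetric, unfolded comp_def])
  finally have "\<forall>\<tau>\<in>U. g \<tau> = 0" using triangular_combination_eq_0[of U h r w, OF fin diag tri] s by simp
  moreover obtain \<tau> where "\<tau> \<in> U'" "v = h \<tau>" using v TU by auto
  ultimately show "u v = 0" by (auto simp: g_def U'_def)
qed

context finite_complex begin

text \<open>\<open>U\<close> are the upper faces of a matching pairing \<open>\<tau>\<close> with \<open>\<tau> - {m \<tau>}\<close>; the hypothesis
  \<open>acyclic\<close> is the acyclicity of the matching, witnessed by the weight \<open>w\<close>.\<close>

lemma card_le_dim_boundaries:
  fixes U :: "nat set set" and m :: "nat set \<Rightarrow> nat" and w :: "nat set \<Rightarrow> nat"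
  assumes U: "U \<subseteq> faces K (p + 1)" and m: "\<And>\<tau>. \<tau> \<in> U \<Longrightarrow> m \<tau> \<in> \<tau>"
    and acyclic: "\<And>\<tau> \<tau>'. \<tau> \<in> U \<Longrightarrow> \<tau>' \<in> U \<Longrightarrow> \<tau> \<noteq> \<tau>' \<Longrightarrow> \<tau>' - {m \<tau>'} \<subseteq> \<tau> \<Longrightarrow> w \<tau> < w \<tau>'"
  shows "card U \<le> chain.dim (boundaries K p :: (nat set \<Rightarrow> 'k::field) set)"
proof -
  define h :: "nat set \<Rightarrow> nat set \<Rightarrow> 'k" where "h \<tau> = boundary K (unit_chain \<tau>)" for \<tau>
  have "finite (faces K (p + 1))" using finite_K by (simp add: faces_def)
  with U have fin: "finite U" by (rule finite_subset)
  have diag: "h \<tau> (\<tau> - {m \<tau>}) \<noteq> 0" if \<tau>: "\<tau> \<in> U" for \<tau>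
  proof -
    have "\<tau> \<in> K" using U \<tau> by (auto simp: faces_def)
    moreover have "card \<tau> = Suc (card (\<tau> - {m \<tau>}))"
      using card.remove[OF finite_face[OF \<open>\<tau> \<in> K\<close>] m[OF \<tau>]] .
    ultimately have "\<tau> \<in> cofacets K (\<tau> - {m \<tau>})" by (auto simp: cofacets_def)
    moreover have "\<tau> - (\<tau> - {m \<tau>}) = {m \<tau>}" using m[OF \<tau>] by auto
    ultimately show ?thesis by (simp add: h_def boundary_unit_chain bsign_nonzero)
  qed
  have tri: "w \<tau> < w \<tau>'" if "\<tau> \<in> U" "\<tau>' \<in> U" "\<tau> \<noteq> \<tau>'" "h \<tau> (\<tau>' - {m \<tau>'}) \<noteq> 0" for \<tau> \<tau>'
    using that acyclic by (auto simp: h_def boundary_unit_chain cofacets_def split: if_splits)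
  have "h ` U \<subseteq> boundaries K p"
  proof
    fix x assume "x \<in> h ` U"
    then obtain \<tau> where \<tau>: "\<tau> \<in> U" "x = h \<tau>" by auto
    have "unit_chain \<tau> \<in> (chains K (p + 1) :: (nat set \<Rightarrow> 'k) set)"
      using \<tau>(1) U by (auto simp: chains_def faces_def unit_chain_def split: if_splits)
    then show "x \<in> boundaries K p" using \<tau> by (auto simp: boundaries_def h_def)
  qed
  moreover have "boundaries K p \<subseteq> chain.span ((unit_chain :: nat set \<Rightarrow> nat set \<Rightarrow> 'k) ` faces K p)"
    using boundary_in_chains chains_eq_span_unit_chains unfolding boundaries_def by blast
  moreover have "finite ((unit_chain :: nat set \<Rightarrow> nat set \<Rightarrow> 'k) ` faces K p)"
    using finite_K by (simp add: faces_def)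
  ultimately have "card (h ` U) \<le> chain.dim (boundaries K p :: (nat set \<Rightarrow> 'k) set)"
    using independent_card_le_dim_span triangular_independent[of U h "\<lambda>\<tau>. \<tau> - {m \<tau>}" w, OF fin diag tri] by blast
  then show ?thesis using card_image[OF triangular_inj_on[of U h "\<lambda>\<tau>. \<tau> - {m \<tau>}" w, OF diag tri]] by simp
qed

text \<open>Counting form of the Morse inequalities, for \<open>c q\<close> critical and \<open>u q\<close> upper faces in
  degree \<open>q\<close>.  With \<open>Z q\<close>, \<open>B q\<close> the dimensions of cycles and boundaries, rank--nullity gives
  \<open>Z q + B (q - 1) = c q + u q + u (q + 1)\<close>, and \<open>u (q + 1) \<le> B q \<le> Z q\<close>; away from degree
  \<open>d\<close> this forces \<open>B (q - 1) = u q\<close>.\<close>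

lemma red_homology_dim_eq_critical:
  fixes c u :: "int \<Rightarrow> nat" and d :: int
  assumes faces: "\<And>q. card (faces K q) = c q + u q + u (q + 1)"
    and upper: "\<And>q. u (q + 1) \<le> chain.dim (boundaries K q :: (nat set \<Rightarrow> 'k::field) set)"
    and concentrated: "\<And>q. q \<noteq> d \<Longrightarrow> c q = 0"
  shows "red_homology_dim TYPE('k) K p = c p"
proof -
  define Z where "Z q = chain.dim (cycles K q :: (nat set \<Rightarrow> 'k) set)" for q
  define B where "B q = chain.dim (boundaries K q :: (nat set \<Rightarrow> 'k) set)" for q
  have rank: "Z q + B (q - 1) = c q + u q + u (q + 1)" for q
    using dim_cycles_add_dim_boundaries[of q, where 'k='k] faces unfolding Z_def B_def by simp
  have B_le_Z: "B q \<le> Z q" for q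
    using dim_boundaries_le_dim_cycles unfolding Z_def B_def .
  have u_le_B: "u q \<le> B (q - 1)" for q
    using upper[of "q - 1"] unfolding B_def by simp
  have B_eq: "B (q - 1) = u q" for q
  proof (cases "q = d")
    case False
    then show ?thesis using rank[of q] B_le_Z[of q] u_le_B[of q] u_le_B[of "q + 1"] concentrated by force
  next
    case True
    then have "q - 1 \<noteq> d" by simp
    then show ?thesis
      using rank[of "q - 1"] B_le_Z[of "q - 1"] u_le_B[of q] u_le_B[of "q - 1"] concentrated by force
  qed
  have "red_homology_dim TYPE('k) K p = Z p - B p" unfolding red_homology_dim_def Z_def B_def by simp
  also have "\<dots> = c p" using rank[of p] B_eq[of p] B_eq[of "p + 1"] by simp
  finally show ?thesis .
qed

end

section \<open>An acyclic matching on \<open>\<Omega>\<^sup>n\<^sub>t\<close>\<close>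

text \<open>\<open>free_window t s e\<close>: the window \<open>{e - t + 1..e}\<close> misses \<open>s\<close>, written without
  truncated subtraction.\<close>

definition free_window :: "nat \<Rightarrow> nat set \<Rightarrow> nat \<Rightarrow> bool" where
  "free_window t s e \<longleftrightarrow> t \<le> e \<and> (\<forall>y. e < y + t \<longrightarrow> y \<le> e \<longrightarrow> y \<notin> s)"

definition first_window :: "nat \<Rightarrow> nat set \<Rightarrow> nat" where
  "first_window t s = (LEAST e. free_window t s e)"

lemma free_windowD: "free_window t s e \<Longrightarrow> e < y + t \<Longrightarrow> y \<le> e \<Longrightarrow> y \<notin> s"
  unfolding free_window_def by blast

lemma free_window_subset: "free_window t s e \<Longrightarrow> r \<subseteq> s \<Longrightarrow> free_window t r e"
  unfolding free_window_def by auto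

lemma first_window_le: "free_window t s e \<Longrightarrow> first_window t s \<le> e"
  unfolding first_window_def by (rule Least_le)

lemma free_window_first_window: "free_window t s e \<Longrightarrow> free_window t s (first_window t s)"
  unfolding first_window_def by (rule LeastI)

lemma not_free_window_less_first_window: "e < first_window t s \<Longrightarrow> \<not> free_window t s e"
  unfolding first_window_def by (rule not_less_Least)

lemma first_window_mono: "free_window t s e \<Longrightarrow> r \<subseteq> s \<Longrightarrow> first_window t r \<le> first_window t s"
  by (meson first_window_le free_window_first_window free_window_subset)

lemma first_window_eqI:
  "free_window t s e \<Longrightarrow> (\<And>e'. e' < e \<Longrightarrow> \<not> free_window t s e') \<Longrightarrow> first_window t s = e"
  unfolding first_window_def by (rule Least_equality) (auto simp: not_less[symmetric])

lemma first_window_remove: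
  assumes "free_window t s e" and less: "first_window t (s - {y}) < first_window t s"
  shows "y \<le> first_window t (s - {y}) \<and> first_window t (s - {y}) < y + t"
proof (rule ccontr)
  let ?e = "first_window t (s - {y})"
  have "free_window t (s - {y}) ?e"
    using free_window_first_window free_window_subset[OF assms(1)] by blast
  moreover assume "\<not> (y \<le> ?e \<and> ?e < y + t)"
  ultimately have "free_window t s ?e" unfolding free_window_def by auto
  then show False using first_window_le less by fastforce
qed

definition toggle :: "nat set \<Rightarrow> nat \<Rightarrow> nat set" where
  "toggle s x = (if x \<in> s then s - {x} else insert x s)"

lemma toggle_toggle [simp]: "toggle (toggle s x) x = s"
  unfolding toggle_def by auto

lemma toggle_mem: "x \<in> s \<Longrightarrow> toggle s x = s - {x}"
  by (simp add: toggle_def)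

lemma toggle_not_mem: "x \<notin> s \<Longrightarrow> toggle s x = insert x s"
  by (simp add: toggle_def)

lemma mod_mult_add_le:
  fixes k d t :: nat
  assumes "d \<le> t"
  shows "(k * (t + 1) + d) mod (t + 1) = d"
proof -
  have "(k * (t + 1) + d) mod (t + 1) = d mod (t + 1)"
    by (rule euclidean_semiring_cancel_class.mod_mult_self3)
  then show ?thesis using assms by simp
qed

definition pivots :: "nat \<Rightarrow> nat \<Rightarrow> nat set" where
  "pivots n t = {x. x mod (t + 1) = 1 \<and> x + t + 1 \<le> n}"

lemma pivots_pos: "x \<in> pivots n t \<Longrightarrow> 1 \<le> x"
  by (auto simp: pivots_def intro: ccontr)

lemma pivots_gap: "x \<in> pivots n t \<Longrightarrow> y \<in> pivots n t \<Longrightarrow> y < x \<Longrightarrow> y + t + 1 \<le> x"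
proof -
  assume xy: "x \<in> pivots n t" "y \<in> pivots n t" "y < x"
  then have "x mod (t + 1) = y mod (t + 1)" by (simp add: pivots_def)
  then have "(t + 1) dvd (x - y)" using xy(3) by (simp add: mod_eq_dvd_iff_nat)
  then obtain k where k: "x - y = (t + 1) * k" by auto
  with xy(3) have "k \<noteq> 0" by (intro notI) simp
  then show ?thesis using k xy(3) by (cases k) auto
qed

definition stable_toggle :: "nat \<Rightarrow> nat \<Rightarrow> nat set \<Rightarrow> nat \<Rightarrow> bool" where
  "stable_toggle n t s x \<longleftrightarrow> free_window t (toggle s x) n \<and> first_window t (toggle s x) = n"

text \<open>Meaningful only for matched faces; otherwise the \<open>LEAST\<close> ranges over an empty set.\<close>

definition match_vertex :: "nat \<Rightarrow> nat \<Rightarrow> nat set \<Rightarrow> nat" where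
  "match_vertex n t s =
     (if first_window t s < n then Suc (first_window t s)
      else (LEAST x. x \<in> pivots n t \<and> stable_toggle n t s x))"

definition matched :: "nat \<Rightarrow> nat \<Rightarrow> nat set \<Rightarrow> bool" where
  "matched n t s \<longleftrightarrow> first_window t s < n \<or> (\<exists>x\<in>pivots n t. stable_toggle n t s x)"

locale omega_complex =
  fixes n t :: nat
  assumes t_pos: "1 \<le> t" and t_le_n: "t \<le> n"
begin

abbreviation "K \<equiv> omega n t"

lemma mem_omega_iff: "s \<in> K \<longleftrightarrow> s \<subseteq> {1..n} \<and> (\<exists>e\<le>n. free_window t s e)"
proof
  assume "s \<in> K"
  then obtain i where i: "1 \<le> i" "i \<le> n - t + 1" "s \<subseteq> {1..n} - {i..i + t - 1}"
    unfolding omega_def omega_facets_def by auto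
  then have "free_window t s (i + t - 1)" "i + t - 1 \<le> n"
    unfolding free_window_def using t_pos t_le_n by auto
  then show "s \<subseteq> {1..n} \<and> (\<exists>e\<le>n. free_window t s e)" using i by auto
next
  assume "s \<subseteq> {1..n} \<and> (\<exists>e\<le>n. free_window t s e)"
  then obtain e where e: "s \<subseteq> {1..n}" "e \<le> n" "free_window t s e" by auto
  define i where "i = e + 1 - t"
  have i: "1 \<le> i" "i \<le> n - t + 1" "i + t - 1 = e"
    using e t_pos t_le_n by (auto simp: i_def free_window_def)
  have "s \<subseteq> {1..n} - {i..i + t - 1}" using e i unfolding free_window_def by auto
  then show "s \<in> K" unfolding omega_def omega_facets_def using i by blast
qed

lemma omega_subset: "s \<in> K \<Longrightarrow> s \<subseteq> {1..n}"
  using mem_omega_iff by blast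

lemma omega_I: "s \<subseteq> {1..n} \<Longrightarrow> free_window t s e \<Longrightarrow> e \<le> n \<Longrightarrow> s \<in> K"
  using mem_omega_iff by blast

lemma first_window_omega: "s \<in> K \<Longrightarrow> first_window t s \<le> n \<and> free_window t s (first_window t s)"
  using mem_omega_iff first_window_le free_window_first_window by (meson order_trans)

sublocale finite_complex K
proof
  show "finite K"
    using omega_subset by (intro finite_subset[of K "Pow {1..n}"]) auto
  show "finite \<sigma>" if "\<sigma> \<in> K" for \<sigma>
    using omega_subset[OF that] finite_subset by blast
  show "\<tau> \<in> K" if "\<sigma> \<in> K" "\<tau> \<subseteq> \<sigma>" for \<sigma> \<tau>
    using that mem_omega_iff free_window_subset by (meson order_trans)
qed

lemma toggle_after_first_window:
  assumes sK: "s \<in> K" and f: "first_window t s < n"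
  shows "toggle s (Suc (first_window t s)) \<in> K \<and> first_window t (toggle s (Suc (first_window t s))) = first_window t s"
proof -
  let ?s = "toggle s (Suc (first_window t s))"
  have same: "z \<in> ?s \<longleftrightarrow> z \<in> s" if "z \<le> first_window t s" for z
    using that unfolding toggle_def by auto
  have r: "free_window t s (first_window t s)" using first_window_omega sK by auto
  have r': "free_window t ?s (first_window t s)" using r same unfolding free_window_def by auto
  have "first_window t ?s = first_window t s"
  proof (rule first_window_eqI[OF r'])
    fix e' assume e': "e' < first_window t s"
    show "\<not> free_window t ?s e'"
    proof
      assume "free_window t ?s e'"
      then have "free_window t s e'" using same e' unfolding free_window_def by auto
      then show False using not_free_window_less_first_window e' by blast
    qed
  qed
  moreover have "?s \<subseteq> {1..n}" using omega_subset[OF sK] f first_window_omega[OF sK] t_pos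
    unfolding toggle_def free_window_def by auto
  ultimately show ?thesis using omega_I r' f by auto
qed

lemma stable_toggle_insert:
  assumes sK: "s \<in> K" and f: "first_window t s = n" and y: "y \<in> pivots n t" and ny: "y \<notin> s"
  shows "stable_toggle n t s y"
proof -
  have r: "free_window t s n" using first_window_omega[OF sK] f by auto
  have r': "free_window t (insert y s) n" using r y unfolding free_window_def pivots_def by auto
  have "first_window t (insert y s) = n"
  proof (rule first_window_eqI[OF r'])
    fix e' assume "e' < n"
    then show "\<not> free_window t (insert y s) e'"
      using not_free_window_less_first_window[of e' t s] f free_window_subset[of t "insert y s" e' s] by auto
  qed
  then show ?thesis using r' ny by (simp add: stable_toggle_def toggle_def)
qed

lemma stable_toggle_omega:
  assumes "stable_toggle n t s x" "x \<in> pivots n t" "s \<in> K"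
  shows "toggle s x \<in> K"
proof -
  have "free_window t (toggle s x) n" using assms(1) by (simp add: stable_toggle_def)
  moreover have "toggle s x \<subseteq> {1..n}" using omega_subset[OF assms(3)] pivots_pos[OF assms(2)] assms(2)
    unfolding toggle_def pivots_def by auto
  ultimately show ?thesis using omega_I by auto
qed

lemma unstable_pivot:
  assumes sK: "s \<in> K" and f: "first_window t s = n" and x: "x \<in> pivots n t"
    and unstable: "\<not> stable_toggle n t s x"
  shows "x \<in> s \<and> x \<le> first_window t (s - {x}) \<and> first_window t (s - {x}) < x + t"
proof -
  have xs: "x \<in> s" using stable_toggle_insert sK f x unstable by blast
  have rs: "free_window t s n" using first_window_omega[OF sK] f by auto
  then have "free_window t (s - {x}) n" by (rule free_window_subset) blast
  moreover have "first_window t (s - {x}) \<noteq> n" using unstable xs calculation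
    by (simp add: stable_toggle_def toggle_def)
  ultimately have "first_window t (s - {x}) < first_window t s" using first_window_le f by fastforce
  then show ?thesis using first_window_remove[OF rs] xs by blast
qed

lemma match_vertex_pivot:
  assumes f: "first_window t s = n" and m: "matched n t s"
  shows "match_vertex n t s \<in> pivots n t" "stable_toggle n t s (match_vertex n t s)"
    and "\<And>y. y \<in> pivots n t \<Longrightarrow> stable_toggle n t s y \<Longrightarrow> match_vertex n t s \<le> y"
proof -
  have ex: "\<exists>x. x \<in> pivots n t \<and> stable_toggle n t s x" using m f by (auto simp: matched_def)
  have mv: "match_vertex n t s = (LEAST x. x \<in> pivots n t \<and> stable_toggle n t s x)"
    using f by (simp add: match_vertex_def)
  show "match_vertex n t s \<in> pivots n t" "stable_toggle n t s (match_vertex n t s)"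
    using LeastI_ex[OF ex] unfolding mv by auto
  show "match_vertex n t s \<le> y" if "y \<in> pivots n t" "stable_toggle n t s y" for y
    unfolding mv using that by (simp add: Least_le)
qed

lemma unstable_toggle_persists:
  assumes sK: "s \<in> K" and f: "first_window t s = n" and x: "x \<in> pivots n t" and y: "y \<in> pivots n t"
    and yx: "y < x" and unstable: "\<not> stable_toggle n t s y"
  shows "\<not> stable_toggle n t (toggle s x) y"
proof -
  define e where "e = first_window t (s - {y})"
  have ys: "y \<in> s" and ye: "y \<le> e" "e < y + t" using unstable_pivot[OF sK f y unstable] by (auto simp: e_def)
  have "free_window t (s - {y}) e"
    using free_window_first_window free_window_subset first_window_omega[OF sK] e_def by blast
  moreover have "z \<in> toggle s x - {y} \<longleftrightarrow> z \<in> s - {y}" if "z \<le> e" for z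
    using that ye pivots_gap[OF x y yx] unfolding toggle_def by auto
  moreover have "toggle (toggle s x) y = toggle s x - {y}" using ys yx unfolding toggle_def by auto
  ultimately have "free_window t (toggle (toggle s x) y) e" unfolding free_window_def by auto
  then have "first_window t (toggle (toggle s x) y) < n"
    using first_window_le ye pivots_gap[OF x y yx] x by (fastforce simp: pivots_def)
  then show ?thesis by (simp add: stable_toggle_def)
qed

lemma match_vertex_toggle:
  assumes sK: "s \<in> K" and m: "matched n t s"
  shows "toggle s (match_vertex n t s) \<in> K \<and> matched n t (toggle s (match_vertex n t s))
    \<and> match_vertex n t (toggle s (match_vertex n t s)) = match_vertex n t s"
proof (cases "first_window t s < n")
  case True
  then show ?thesis
    using toggle_after_first_window[OF sK True] by (simp add: match_vertex_def matched_def)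
next
  case False
  then have f: "first_window t s = n" using first_window_omega[OF sK] by simp
  define x where "x = match_vertex n t s"
  note x = match_vertex_pivot[OF f m, folded x_def]
  have s'K: "toggle s x \<in> K" using stable_toggle_omega[OF x(2,1) sK] .
  have f': "first_window t (toggle s x) = n" using x(2) by (simp add: stable_toggle_def)
  have x_stable: "stable_toggle n t (toggle s x) x" using f first_window_omega[OF sK] by (simp add: stable_toggle_def)
  then have m': "matched n t (toggle s x)" using x(1) by (auto simp: matched_def)
  define y where "y = match_vertex n t (toggle s x)"
  note y = match_vertex_pivot[OF f' m', folded y_def]
  have "y = x"
  proof (rule antisym)
    show "y \<le> x" using y(3)[OF x(1) x_stable] .
    show "x \<le> y"
    proof (rule ccontr)
      assume "\<not> x \<le> y"
      then have "\<not> stable_toggle n t s y" using x(3) y(1) by fastforce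
      then show False using unstable_toggle_persists[OF sK f x(1) y(1)] \<open>\<not> x \<le> y\<close> y(2) by simp
    qed
  qed
  then show ?thesis using s'K m' by (simp add: x_def y_def)
qed

text \<open>Both matching vertices are least stable pivots, \<open>x\<close> for \<open>\<tau>\<close> and \<open>w\<close> for \<open>\<tau> - {u}\<close>, and
  \<open>x < w\<close>; removing \<open>x\<close> from \<open>\<tau> - {u}\<close> opens a window that must contain \<open>u\<close> and lies
  below \<open>w\<close>.\<close>

lemma removed_vertex_less_match_pivot:
  assumes \<tau>K: "\<tau> \<in> K" and f: "first_window t \<tau> = n" "first_window t (\<tau> - {u}) = n"
    and m: "matched n t \<tau>" "match_vertex n t \<tau> \<in> \<tau>"
    and u: "u \<in> \<tau>" "u \<noteq> match_vertex n t \<tau>"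
    and m': "matched n t (\<tau> - {u})" "match_vertex n t (\<tau> - {u}) \<notin> \<tau> - {u}"
  shows "u < match_vertex n t (\<tau> - {u})"
proof -
  let ?s = "\<tau> - {u}"
  define x where "x = match_vertex n t \<tau>"
  define w where "w = match_vertex n t ?s"
  note x = match_vertex_pivot[OF f(1) m(1), folded x_def]
  note w = match_vertex_pivot[OF f(2) m'(1), folded w_def]
  have "w \<noteq> u"
  proof
    assume "w = u"
    then have "toggle ?s w = \<tau>" using u unfolding toggle_def by auto
    then have "x = w" using match_vertex_toggle[OF _ m'(1)] \<tau>K face_subset unfolding x_def w_def by auto
    then show False using \<open>w = u\<close> u(2) x_def by simp
  qed
  then have "w \<notin> \<tau>" using m'(2) w_def by auto
  then have "x \<le> w" using x(3)[OF w(1)] stable_toggle_insert[OF \<tau>K f(1) w(1)] by blast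
  moreover have "x \<noteq> w" using \<open>w \<notin> \<tau>\<close> m(2) x_def by auto
  ultimately have xw: "x < w" by simp
  then have "\<not> stable_toggle n t ?s x" using w(3)[OF x(1)] by auto
  then have x_in: "x \<le> first_window t (?s - {x})" "first_window t (?s - {x}) < x + t"
    using unstable_pivot[OF face_subset[OF \<tau>K] f(2) x(1)] by auto
  have "first_window t (\<tau> - {x}) = n"
    using x(2) m(2) x_def by (simp add: stable_toggle_def toggle_def)
  moreover have "free_window t (\<tau> - {x}) n"
    using x(2) m(2) x_def by (simp add: stable_toggle_def toggle_def)
  moreover have "?s - {x} = (\<tau> - {x}) - {u}" by auto
  ultimately have "u \<le> first_window t (?s - {x})"
    using first_window_remove[of t "\<tau> - {x}" n u] x_in xw w(1) x(1) by (fastforce simp: pivots_def)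
  then show ?thesis using x_in pivots_gap[OF w(1) x(1) xw] w_def by simp
qed

lemma removed_vertex_less_match_vertex:
  assumes \<tau>K: "\<tau> \<in> K" and m: "matched n t \<tau>" "match_vertex n t \<tau> \<in> \<tau>"
    and u: "u \<in> \<tau>" "u \<noteq> match_vertex n t \<tau>"
    and m': "matched n t (\<tau> - {u})" "match_vertex n t (\<tau> - {u}) \<notin> \<tau> - {u}"
  shows "u < match_vertex n t (\<tau> - {u})"
proof -
  let ?s = "\<tau> - {u}"
  have r: "free_window t \<tau> (first_window t \<tau>)" and le_n: "first_window t \<tau> \<le> n"
    using first_window_omega[OF \<tau>K] by auto
  have "first_window t ?s \<le> first_window t \<tau>" using first_window_mono[OF r] by blast
  then consider (less) "first_window t ?s < first_window t \<tau>"
    | (before_n) "first_window t ?s = first_window t \<tau>" "first_window t \<tau> < n"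
    | (at_n) "first_window t ?s = n" "first_window t \<tau> = n"
    using le_n by linarith
  then show ?thesis
  proof cases
    case less
    then have "u \<le> first_window t ?s" using first_window_remove[OF r] by blast
    moreover have "first_window t ?s < n" using less le_n by simp
    ultimately show ?thesis by (simp add: match_vertex_def)
  next
    case before_n
    then have "match_vertex n t ?s = match_vertex n t \<tau>" by (simp add: match_vertex_def)
    then show ?thesis using m(2) u m'(2) by auto
  next
    case at_n
    show ?thesis by (rule removed_vertex_less_match_pivot[OF \<tau>K at_n(2,1) m u m'])
  qed
qed

definition binary_weight :: "nat set \<Rightarrow> nat" where
  "binary_weight s = (\<Sum>x\<in>s. 2 ^ x)"

lemma binary_weight_exchange_less:
  assumes "finite \<tau>" "u \<in> \<tau>" "w \<notin> \<tau>" "u < w"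
  shows "binary_weight \<tau> < binary_weight (insert w (\<tau> - {u}))"
proof -
  have "binary_weight \<tau> = 2 ^ u + binary_weight (\<tau> - {u})"
    using sum.remove[OF assms(1,2), of "\<lambda>x. 2 ^ x"] unfolding binary_weight_def by simp
  moreover have "binary_weight (insert w (\<tau> - {u})) = 2 ^ w + binary_weight (\<tau> - {u})"
    using assms unfolding binary_weight_def by simp
  moreover have "(2::nat) ^ u < 2 ^ w" using assms(4) by simp
  ultimately show ?thesis by simp
qed

lemma binary_weight_less_if_facet:
  assumes \<tau>: "\<tau> \<in> K" "matched n t \<tau>" "match_vertex n t \<tau> \<in> \<tau>"
    and \<tau>': "\<tau>' \<in> K" "matched n t \<tau>'" "match_vertex n t \<tau>' \<in> \<tau>'"
    and ne: "\<tau> \<noteq> \<tau>'" and card_eq: "card \<tau> = card \<tau>'" and sub: "\<tau>' - {match_vertex n t \<tau>'} \<subseteq> \<tau>"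
  shows "binary_weight \<tau> < binary_weight \<tau>'"
proof -
  let ?s = "\<tau>' - {match_vertex n t \<tau>'}"
  have s: "?s \<in> K" "matched n t ?s" "match_vertex n t ?s = match_vertex n t \<tau>'"
    using match_vertex_toggle[OF \<tau>'(1,2)] unfolding toggle_mem[OF \<tau>'(3)] by auto
  have fin: "finite \<tau>" "finite ?s" using finite_face \<tau>(1) \<tau>'(1) by auto
  have "card ?s = card \<tau> - 1" using card_Diff_singleton[OF \<tau>'(3)] card_eq by simp
  moreover have "card \<tau> \<ge> 1" using \<tau>(3) fin(1) by (auto simp: Suc_le_eq card_gt_0_iff)
  ultimately have "card (\<tau> - ?s) = 1" using card_Diff_subset[OF fin(2) sub] by simp
  then obtain u where u: "\<tau> - ?s = {u}" by (meson card_1_singletonE)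
  then have u_in: "u \<in> \<tau>" and s_eq: "?s = \<tau> - {u}" using sub by auto
  have "u \<noteq> match_vertex n t \<tau>"
  proof
    assume "u = match_vertex n t \<tau>"
    then have "match_vertex n t ?s = match_vertex n t \<tau>"
      using match_vertex_toggle[OF \<tau>(1,2)] s_eq toggle_mem[OF \<tau>(3)] by simp
    then have "\<tau>' = \<tau>" using s(3) s_eq \<open>u = match_vertex n t \<tau>\<close> \<tau>(3) \<tau>'(3) by auto
    then show False using ne by simp
  qed
  then have less: "u < match_vertex n t \<tau>'"
    using removed_vertex_less_match_vertex[OF \<tau> u_in] s s_eq by auto
  then have "match_vertex n t \<tau>' \<notin> \<tau>" using s_eq by auto
  then have "binary_weight \<tau> < binary_weight (insert (match_vertex n t \<tau>') (\<tau> - {u}))"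
    using less by (rule binary_weight_exchange_less[OF fin(1) u_in])
  moreover have "insert (match_vertex n t \<tau>') (\<tau> - {u}) = \<tau>'" using s_eq \<tau>'(3) by auto
  ultimately show ?thesis by simp
qed

end

section \<open>The critical face\<close>

text \<open>The unique critical face: both endpoints of every block \<open>{k(t+1)+1..(k+1)(t+1)}\<close> that ends
  before \<open>n - t\<close>, together with \<open>n - t\<close>.\<close>

definition critical_face :: "nat \<Rightarrow> nat \<Rightarrow> nat set" where
  "critical_face n t = {y. 1 \<le> y \<and> y + t + 1 \<le> n \<and> (y mod (t + 1) = 1 \<or> y mod (t + 1) = 0)}
     \<union> {y. 1 \<le> y \<and> y + t = n}"

lemma critical_face_meets_window:
  assumes t: "1 \<le> t" and e: "t \<le> e" "e + t < n"
  obtains y where "y \<in> critical_face n t" "e < y + t" "y \<le> e"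
proof -
  define y0 where "y0 = e + 1 - t"
  define r where "r = y0 mod (t + 1)"
  define q where "q = y0 div (t + 1)"
  have y0q: "y0 = q * (t + 1) + r" unfolding q_def r_def by (rule div_mult_mod_eq[symmetric])
  have rt: "r \<le> t" unfolding r_def by (simp add: less_Suc_eq_le)
  have y01: "1 \<le> y0" using e unfolding y0_def by simp
  show ?thesis
  proof (cases "r \<le> 1")
    case True
    then have "y0 mod (t + 1) = 1 \<or> y0 mod (t + 1) = 0" unfolding r_def by auto
    moreover have "y0 + t + 1 \<le> n" using e t unfolding y0_def by simp
    ultimately have "y0 \<in> critical_face n t" using y01 by (simp add: critical_face_def)
    moreover have "e < y0 + t" "y0 \<le> e" using e t unfolding y0_def by auto
    ultimately show ?thesis using that by blast
  next
    case False
    define y where "y = (q + 1) * (t + 1)"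
    have "y mod (t + 1) = 0" unfolding y_def by (simp only: mod_mult_self2_is_0)
    moreover have yy: "y = y0 + (t + 1 - r)" using y0q rt unfolding y_def by (simp add: algebra_simps)
    moreover have "y \<le> e" using yy False e rt unfolding y0_def by arith
    ultimately have "y \<in> critical_face n t" using y01 e by (simp add: critical_face_def)
    moreover have "e < y + t" "y \<le> e" using yy False e rt unfolding y0_def by arith+
    ultimately show ?thesis using that by blast
  qed
qed

context omega_complex begin

lemma free_window_critical_face: "free_window t (critical_face n t) n"
  unfolding free_window_def using t_pos t_le_n by (auto simp: critical_face_def)

lemma critical_face_omega: "critical_face n t \<in> K"
  by (rule omega_I[OF _ free_window_critical_face]) (auto simp: critical_face_def)

lemma first_window_critical_face: "first_window t (critical_face n t) = n"
proof (rule first_window_eqI[OF free_window_critical_face])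
  fix e assume e: "e < n"
  show "\<not> free_window t (critical_face n t) e"
  proof
    assume window: "free_window t (critical_face n t) e"
    then have te: "t \<le> e" by (simp add: free_window_def)
    show False
    proof (cases "n - t \<le> e")
      case True
      then have "n - t \<in> critical_face n t" using e te by (auto simp: critical_face_def)
      then show False using free_windowD[OF window _ True] e te by simp
    next
      case False
      then obtain y where "y \<in> critical_face n t" "e < y + t" "y \<le> e"
        using critical_face_meets_window[OF t_pos te] by (metis add.commute less_diff_conv not_le)
      then show False using free_windowD[OF window] by blast
    qed
  qed
qed

lemma critical_face_unstable:
  assumes res: "n mod (t + 1) = 0 \<or> n mod (t + 1) = t" and x: "x \<in> pivots n t"
  shows "\<not> stable_toggle n t (critical_face n t) x"
proof -
  have xP: "x mod (t + 1) = 1" "x + t + 1 \<le> n" "1 \<le> x" using x pivots_pos[OF x] unfolding pivots_def by auto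
  then have "x \<in> critical_face n t" by (simp add: critical_face_def)
  then have toggle_eq: "toggle (critical_face n t) x = critical_face n t - {x}" by (rule toggle_mem)
  define k where "k = x div (t + 1)"
  have xk: "x = k * (t + 1) + 1" using xP(1) div_mult_mod_eq[of x "t + 1"] unfolding k_def by simp
  have "free_window t (critical_face n t - {x}) (x + t - 1)" unfolding free_window_def
  proof (intro conjI allI impI)
    show "t \<le> x + t - 1" using xP by simp
    fix y assume y: "x + t - 1 < y + t" "y \<le> x + t - 1"
    show "y \<notin> critical_face n t - {x}"
    proof (cases "y = x")
      case False
      define d where "d = y - x"
      have d: "1 \<le> d" "d + 1 \<le> t" "y = k * (t + 1) + (1 + d)" using y False xP xk unfolding d_def by auto
      have ym: "y mod (t + 1) = 1 + d" using mod_mult_add_le[of "1 + d" t k] d by simp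
      have "y + t \<noteq> n"
      proof
        assume "y + t = n"
        then have "n = (k + 1) * (t + 1) + d" using d by (simp add: algebra_simps)
        then have "n mod (t + 1) = d" using mod_mult_add_le[of d t "k + 1"] d by simp
        then show False using res d by auto
      qed
      then show ?thesis using ym d by (auto simp: critical_face_def)
    qed simp
  qed
  then have "first_window t (critical_face n t - {x}) < n" using first_window_le xP by fastforce
  then show ?thesis unfolding stable_toggle_def toggle_eq by simp
qed

lemma critical_face_unmatched:
  "n mod (t + 1) = 0 \<or> n mod (t + 1) = t \<Longrightarrow> \<not> matched n t (critical_face n t)"
  using first_window_critical_face critical_face_unstable by (auto simp: matched_def)

lemma last_window_start_mem:
  assumes sK: "s \<in> K" and f: "first_window t s = n" and nt: "t + 1 \<le> n"
  shows "n - t \<in> s"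
proof (rule ccontr)
  assume a: "n - t \<notin> s"
  have rs: "free_window t s n" using first_window_omega[OF sK] f by auto
  have "free_window t s (n - 1)" unfolding free_window_def
  proof (intro conjI allI impI)
    show "t \<le> n - 1" using nt by simp
    fix y assume y: "n - 1 < y + t" "y \<le> n - 1"
    show "y \<notin> s"
    proof (cases "y = n - t")
      case False
      then have "n < y + t" "y \<le> n" using y nt by auto
      then show ?thesis using free_windowD[OF rs] by blast
    qed (use a in simp)
  qed
  then have "first_window t s \<le> n - 1" by (rule first_window_le)
  then show False using f nt by simp
qed

lemma pivot_first_window_remove:
  assumes sK: "s \<in> K" and f: "first_window t s = n" and unmatched: "\<not> matched n t s" and nt: "t + 1 \<le> n"
    and p: "p \<in> pivots n t" and prev: "p = 1 \<or> p - 1 \<in> s"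
  shows "p \<in> s \<and> first_window t (s - {p}) = p + t - 1 \<and> first_window t (s - {p}) < n - t"
proof -
  define e where "e = first_window t (s - {p})"
  have "\<not> stable_toggle n t s p" using unmatched p by (auto simp: matched_def)
  then have ps: "p \<in> s" and pe: "p \<le> e" "e < p + t"
    using unstable_pivot[OF sK f p] by (auto simp: e_def)
  have re: "free_window t (s - {p}) e"
    using free_window_first_window free_window_subset first_window_omega[OF sK] e_def by blast
  have pP: "p + t + 1 \<le> n" "1 \<le> p" using p pivots_pos[OF p] by (auto simp: pivots_def)
  have "e < n - t"
  proof (rule ccontr)
    assume "\<not> e < n - t"
    moreover have "e < (n - t) + t" using pe pP by simp
    ultimately have "n - t \<notin> s - {p}" using free_windowD[OF re] by simp
    then show False using last_window_start_mem[OF sK f nt] pP by simp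
  qed
  moreover have "e = p + t - 1"
  proof (cases "p = 1")
    case True
    then show ?thesis using re pe by (simp add: free_window_def)
  next
    case False
    then have "p - 1 \<in> s - {p}" using prev pP by simp
    then have "\<not> e < (p - 1) + t" using re free_windowD[of t "s - {p}" e "p - 1"] pe by linarith
    then show ?thesis using pe pP by arith
  qed
  ultimately show ?thesis using ps e_def by simp
qed

lemma pivot_block:
  assumes sK: "s \<in> K" and f: "first_window t s = n" and unmatched: "\<not> matched n t s" and nt: "t + 1 \<le> n"
    and p: "p \<in> pivots n t" and prev: "p = 1 \<or> p - 1 \<in> s"
  shows "p \<in> s \<and> (\<forall>y. p < y \<and> y < p + t \<longrightarrow> y \<notin> s) \<and> p + t \<in> s \<and> p + 2 * t \<le> n"
proof -
  define e where "e = first_window t (s - {p})"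
  have ps: "p \<in> s" and ee: "e = p + t - 1" and en: "e < n - t"
    using pivot_first_window_remove[OF assms] by (auto simp: e_def)
  have re: "free_window t (s - {p}) e"
    using free_window_first_window free_window_subset first_window_omega[OF sK] e_def by blast
  have pP: "p + t + 1 \<le> n" "1 \<le> p" using p pivots_pos[OF p] by (auto simp: pivots_def)
  have mid: "\<forall>y. p < y \<and> y < p + t \<longrightarrow> y \<notin> s"
  proof (intro allI impI)
    fix y assume y: "p < y \<and> y < p + t"
    then have "e < y + t" "y \<le> e" using ee pP by auto
    then have "y \<notin> s - {p}" by (rule free_windowD[OF re])
    then show "y \<notin> s" using y by simp
  qed
  moreover have "p + t \<in> s"
  proof (rule ccontr)
    assume a: "p + t \<notin> s"
    have "free_window t s (p + t)" unfolding free_window_def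
    proof (intro conjI allI impI)
      fix y assume "p + t < y + t" "y \<le> p + t"
      then show "y \<notin> s" using mid a by (cases "y = p + t") auto
    qed simp
    then have "n \<le> p + t" using first_window_le f by fastforce
    then show False using pP by simp
  qed
  ultimately show ?thesis using ps ee en pP by simp
qed

lemma pivot_blocks:
  assumes sK: "s \<in> K" and f: "first_window t s = n" and unmatched: "\<not> matched n t s" and nt: "t + 1 \<le> n"
    and p: "p \<in> pivots n t"
  shows "p \<in> s \<and> (\<forall>y. p < y \<and> y < p + t \<longrightarrow> y \<notin> s) \<and> p + t \<in> s \<and> p + 2 * t \<le> n"
proof -
  have "k * (t + 1) + 1 \<in> pivots n t \<longrightarrow> k * (t + 1) + 1 \<in> s \<and> (\<forall>y. k * (t + 1) + 1 < y \<and> y < k * (t + 1) + 1 + t \<longrightarrow> y \<notin> s)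
      \<and> k * (t + 1) + 1 + t \<in> s \<and> k * (t + 1) + 1 + 2 * t \<le> n" for k
  proof (induction k)
    case 0
    show ?case using pivot_block[OF sK f unmatched nt, of 1] by simp
  next
    case (Suc k)
    show ?case
    proof
      assume P1: "Suc k * (t + 1) + 1 \<in> pivots n t"
      have "(k * (t + 1) + 1) mod (t + 1) = 1" using mod_mult_add_le[of 1 t k] t_pos by simp
      moreover have "k * (t + 1) + 1 + t + 1 \<le> n" using P1 unfolding pivots_def by simp
      ultimately have "k * (t + 1) + 1 \<in> pivots n t" unfolding pivots_def by simp
      then have "Suc k * (t + 1) + 1 - 1 \<in> s" using Suc.IH by (simp add: algebra_simps)
      then show "Suc k * (t + 1) + 1 \<in> s \<and> (\<forall>y. Suc k * (t + 1) + 1 < y \<and> y < Suc k * (t + 1) + 1 + t \<longrightarrow> y \<notin> s)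
          \<and> Suc k * (t + 1) + 1 + t \<in> s \<and> Suc k * (t + 1) + 1 + 2 * t \<le> n"
        using pivot_block[OF sK f unmatched nt P1] by blast
    qed
  qed
  moreover have "p = (p div (t + 1)) * (t + 1) + 1"
    using p div_mult_mod_eq[of p "t + 1"] unfolding pivots_def by simp
  ultimately show ?thesis using p by metis
qed

lemma unmatched_mem_iff:
  assumes sK: "s \<in> K" and f: "first_window t s = n" and unmatched: "\<not> matched n t s" and nt: "t + 1 \<le> n"
    and y: "1 \<le> y" "y + t + 1 \<le> n"
  shows "y \<in> s \<longleftrightarrow> y mod (t + 1) = 1 \<or> y mod (t + 1) = 0"
proof -
  define k where "k = (y - 1) div (t + 1)"
  define d where "d = (y - 1) mod (t + 1)"
  have yk: "y = k * (t + 1) + 1 + d" using y div_mult_mod_eq[of "y - 1" "t + 1"] unfolding k_def d_def by simp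
  have dt: "d \<le> t" unfolding d_def by (simp add: less_Suc_eq_le)
  have "k * (t + 1) + 1 \<in> pivots n t" using mod_mult_add_le[of 1 t k] t_pos y yk unfolding pivots_def by simp
  note block = pivot_blocks[OF sK f unmatched nt this]
  consider "d = 0" | "d = t" | "0 < d" "d < t" using dt by linarith
  then show ?thesis
  proof cases
    case 1
    then have "y mod (t + 1) = 1" using yk mod_mult_add_le[of 1 t k] t_pos by simp
    then show ?thesis using block 1 yk by simp
  next
    case 2
    then have "y = (k + 1) * (t + 1)" using yk by (simp add: algebra_simps)
    then have "y mod (t + 1) = 0" by (simp only: mod_mult_self2_is_0)
    then show ?thesis using block 2 yk by simp
  next
    case 3
    then have "y mod (t + 1) = 1 + d" using yk mod_mult_add_le[of "1 + d" t k] by (simp add: add.assoc)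
    moreover have "y \<notin> s" using block yk 3 by auto
    ultimately show ?thesis using 3 by auto
  qed
qed

lemma mem_imp_add_le:
  assumes sK: "s \<in> K" and f: "first_window t s = n" and y: "y \<in> s"
  shows "y + t \<le> n"
proof (rule ccontr)
  assume "\<not> y + t \<le> n"
  moreover have "y \<le> n" using omega_subset[OF sK] y by auto
  moreover have "free_window t s n" using first_window_omega[OF sK] f by auto
  ultimately show False using free_windowD y by force
qed

lemma unmatched_eq_critical_face:
  assumes sK: "s \<in> K" and unmatched: "\<not> matched n t s"
  shows "s = critical_face n t"
proof (rule set_eqI)
  fix y
  have f: "first_window t s = n" using unmatched first_window_omega[OF sK] by (auto simp: matched_def)
  consider (block) "1 \<le> y" "y + t + 1 \<le> n" | (last) "1 \<le> y" "y + t = n" | (out) "y = 0 \<or> n < y + t"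
    by linarith
  then show "y \<in> s \<longleftrightarrow> y \<in> critical_face n t"
  proof cases
    case block
    then show ?thesis using unmatched_mem_iff[OF sK f unmatched _ block] by (auto simp: critical_face_def)
  next
    case last
    then have "y = n - t" "t + 1 \<le> n" by auto
    then show ?thesis using last_window_start_mem[OF sK f] last by (auto simp: critical_face_def)
  next
    case out
    then have "y \<notin> s" using mem_imp_add_le[OF sK f] omega_subset[OF sK] by fastforce
    moreover have "y \<notin> critical_face n t" using out by (auto simp: critical_face_def)
    ultimately show ?thesis by simp
  qed
qed

lemma unmatched_residue:
  assumes sK: "s \<in> K" and unmatched: "\<not> matched n t s"
  shows "n mod (t + 1) = 0 \<or> n mod (t + 1) = t"
proof (cases "t + 1 \<le> n")
  case False
  then show ?thesis using t_le_n by simp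
next
  case nt: True
  have f: "first_window t s = n" using unmatched first_window_omega[OF sK] by (auto simp: matched_def)
  define q where "q = (n - t - 1) div (t + 1)"
  define r where "r = (n - t - 1) mod (t + 1)"
  have nq: "n - t - 1 = q * (t + 1) + r" unfolding q_def r_def by (rule div_mult_mod_eq[symmetric])
  have rt: "r \<le> t" unfolding r_def by (simp add: less_Suc_eq_le)
  show ?thesis
  proof (cases "r = 0")
    case True
    then have "n = (q + 1) * (t + 1)" using nq nt by (simp add: algebra_simps)
    then have "n mod (t + 1) = 0" by (simp only: mod_mult_self2_is_0)
    then show ?thesis by simp
  next
    case False
    then have "q * (t + 1) + 1 \<in> pivots n t"
      using mod_mult_add_le[of 1 t q] t_pos nq nt unfolding pivots_def by simp
    then have "q * (t + 1) + 1 + 2 * t \<le> n" using pivot_blocks[OF sK f unmatched nt] by blast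
    then have "n = (q + 1) * (t + 1) + t" using nq nt rt by (simp add: algebra_simps)
    then show ?thesis using mod_mult_add_le[of t t "q + 1"] by simp
  qed
qed

end

definition block_ends :: "nat \<Rightarrow> nat \<Rightarrow> nat set" where
  "block_ends t m = {y. 1 \<le> y \<and> y \<le> m \<and> (y mod (t + 1) = 1 \<or> y mod (t + 1) = 0)}"

lemma finite_block_ends: "finite (block_ends t m)"
  by (rule finite_subset[of _ "{..m}"]) (auto simp: block_ends_def)

lemma mem_block_ends_add:
  assumes t: "1 \<le> t" and e: "e \<le> t + 1"
  shows "y \<in> block_ends t (j * (t + 1) + e) \<longleftrightarrow> y \<in> block_ends t (j * (t + 1))
    \<or> (j * (t + 1) < y \<and> y \<le> j * (t + 1) + e \<and> (y = j * (t + 1) + 1 \<or> y = j * (t + 1) + t + 1))"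
proof (cases "y \<le> j * (t + 1)")
  case True
  then show ?thesis by (auto simp: block_ends_def)
next
  case False
  define d where "d = y - j * (t + 1)"
  have yd: "y = j * (t + 1) + d" "1 \<le> d" using False unfolding d_def by auto
  consider "d = t + 1" | "d \<le> e" "d \<le> t" | "e < d" using e by linarith
  then show ?thesis
  proof cases
    case 1
    then have "y = (j + 1) * (t + 1)" using yd by (simp add: algebra_simps)
    then have "y mod (t + 1) = 0" by (simp only: mod_mult_self2_is_0)
    then show ?thesis using yd 1 False e by (auto simp: block_ends_def)
  next
    case 2
    then have "y mod (t + 1) = d" using mod_mult_add_le[of d t j] yd by simp
    then show ?thesis using yd 2 False t by (auto simp: block_ends_def)
  next
    case 3
    then show ?thesis using yd False by (auto simp: block_ends_def)
  qed
qed

lemma block_ends_mult_Suc: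
  assumes "1 \<le> t"
  shows "block_ends t (Suc j * (t + 1)) = insert (j * (t + 1) + 1) (insert (j * (t + 1) + t + 1) (block_ends t (j * (t + 1))))"
proof (rule set_eqI)
  fix y
  have e: "Suc j * (t + 1) = j * (t + 1) + (t + 1)" by simp
  have "y \<in> block_ends t (Suc j * (t + 1)) \<longleftrightarrow> y \<in> block_ends t (j * (t + 1))
      \<or> (j * (t + 1) < y \<and> y \<le> j * (t + 1) + (t + 1) \<and> (y = j * (t + 1) + 1 \<or> y = j * (t + 1) + t + 1))"
    unfolding e by (rule mem_block_ends_add[OF assms order_refl])
  also have "\<dots> \<longleftrightarrow> y \<in> insert (j * (t + 1) + 1) (insert (j * (t + 1) + t + 1) (block_ends t (j * (t + 1))))"
    by auto
  finally show "y \<in> block_ends t (Suc j * (t + 1)) \<longleftrightarrow> y \<in> insert (j * (t + 1) + 1) (insert (j * (t + 1) + t + 1) (block_ends t (j * (t + 1))))" .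
qed

lemma block_ends_mult_add:
  assumes "1 \<le> t"
  shows "block_ends t (j * (t + 1) + t) = insert (j * (t + 1) + 1) (block_ends t (j * (t + 1)))"
proof (rule set_eqI)
  fix y
  have "y \<in> block_ends t (j * (t + 1) + t) \<longleftrightarrow> y \<in> block_ends t (j * (t + 1))
      \<or> (j * (t + 1) < y \<and> y \<le> j * (t + 1) + t \<and> (y = j * (t + 1) + 1 \<or> y = j * (t + 1) + t + 1))"
    by (rule mem_block_ends_add[OF assms]) simp
  also have "\<dots> \<longleftrightarrow> y \<in> insert (j * (t + 1) + 1) (block_ends t (j * (t + 1)))"
    using assms by auto
  finally show "y \<in> block_ends t (j * (t + 1) + t) \<longleftrightarrow> y \<in> insert (j * (t + 1) + 1) (block_ends t (j * (t + 1)))" .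
qed

lemma card_block_ends_mult:
  assumes "1 \<le> t"
  shows "card (block_ends t (j * (t + 1))) = 2 * j"
proof (induction j)
  case 0
  have "block_ends t 0 = {}" by (auto simp: block_ends_def)
  then show ?case by simp
next
  case (Suc j)
  let ?B = "block_ends t (j * (t + 1))"
  have "j * (t + 1) + t + 1 \<notin> ?B" by (auto simp: block_ends_def)
  moreover have "j * (t + 1) + 1 \<notin> insert (j * (t + 1) + t + 1) ?B"
    using assms by (auto simp: block_ends_def)
  ultimately have "card (insert (j * (t + 1) + 1) (insert (j * (t + 1) + t + 1) ?B)) = Suc (Suc (card ?B))"
    using finite_block_ends by simp
  then show ?case unfolding block_ends_mult_Suc[OF assms] Suc.IH by simp
qed

lemma card_block_ends_mult_add:
  assumes "1 \<le> t"
  shows "card (block_ends t (j * (t + 1) + t)) = 2 * j + 1"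
proof -
  have "j * (t + 1) + 1 \<notin> block_ends t (j * (t + 1))" by (auto simp: block_ends_def)
  then have "card (insert (j * (t + 1) + 1) (block_ends t (j * (t + 1)))) = Suc (2 * j)"
    using card_block_ends_mult[OF assms] finite_block_ends by simp
  then show ?thesis unfolding block_ends_mult_add[OF assms] by simp
qed

lemma critical_face_eq_insert:
  assumes "t + 1 \<le> n"
  shows "critical_face n t = insert (n - t) (block_ends t (n - t - 1)) \<and> n - t \<notin> block_ends t (n - t - 1)"
proof -
  have "y \<in> critical_face n t \<longleftrightarrow> y \<in> insert (n - t) (block_ends t (n - t - 1))" for y
  proof -
    have a: "y + t + 1 \<le> n \<longleftrightarrow> y \<le> n - t - 1" using assms by arith
    have b: "(1 \<le> y \<and> y + t = n) \<longleftrightarrow> y = n - t" using assms by arith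
    show ?thesis unfolding critical_face_def block_ends_def Un_iff insert_iff mem_Collect_eq a b by argo
  qed
  moreover have "n - t \<notin> block_ends t (n - t - 1)" using assms by (auto simp: block_ends_def)
  ultimately show ?thesis by blast
qed

lemma card_critical_face_mod_0:
  assumes t: "1 \<le> t" and n: "t \<le> n" and res: "n mod (t + 1) = 0"
  shows "int (card (critical_face n t)) + 1 = 2 * int n div (int t + 1)"
proof -
  define k where "k = n div (t + 1)"
  have nk: "n = k * (t + 1)" using res div_mult_mod_eq[of n "t + 1"] unfolding k_def by simp
  then obtain j where j: "k = Suc j" using n t by (cases k) auto
  then have "n - t - 1 = j * (t + 1)" "t + 1 \<le> n" using nk by auto
  then have "card (critical_face n t) = Suc (card (block_ends t (j * (t + 1))))"
    using critical_face_eq_insert finite_block_ends by (metis card_insert_disjoint)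
  then have "card (critical_face n t) = 2 * j + 1" using card_block_ends_mult[OF t] by simp
  moreover have "2 * int n div (int t + 1) = 2 * int k"
  proof -
    have "2 * int n = (2 * int k) * (int t + 1)" using nk by (simp add: algebra_simps)
    then show ?thesis by simp
  qed
  ultimately show ?thesis using j by linarith
qed

lemma card_critical_face_mod_t:
  assumes t: "1 \<le> t" and res: "n mod (t + 1) = t"
  shows "int (card (critical_face n t)) + 2 = 2 * (int n + 1) div (int t + 1)"
proof -
  define k where "k = n div (t + 1)"
  have nk: "n = k * (t + 1) + t" using res div_mult_mod_eq[of n "t + 1"] unfolding k_def by simp
  have "card (critical_face n t) = 2 * k"
  proof (cases k)
    case 0
    then have "critical_face n t = {}" using nk by (auto simp: critical_face_def)
    then show ?thesis using 0 by simp
  next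
    case (Suc j)
    then have "n - t - 1 = j * (t + 1) + t" "t + 1 \<le> n" using nk by auto
    then have "card (critical_face n t) = Suc (card (block_ends t (j * (t + 1) + t)))"
      using critical_face_eq_insert finite_block_ends by (metis card_insert_disjoint)
    then show ?thesis using card_block_ends_mult_add[OF t] Suc by simp
  qed
  moreover have "2 * (int n + 1) div (int t + 1) = 2 * int k + 2"
  proof -
    have "2 * (int n + 1) = (2 * int k + 2) * (int t + 1)" using nk by (simp add: algebra_simps)
    then show ?thesis by simp
  qed
  ultimately show ?thesis by linarith
qed

section \<open>Homology of \<open>\<Omega>\<^sup>n\<^sub>t\<close>\<close>

context omega_complex begin

definition critical_faces :: "int \<Rightarrow> nat set set" where
  "critical_faces q = {\<sigma> \<in> faces K q. \<not> matched n t \<sigma>}"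

definition upper_faces :: "int \<Rightarrow> nat set set" where
  "upper_faces q = {\<sigma> \<in> faces K q. matched n t \<sigma> \<and> match_vertex n t \<sigma> \<in> \<sigma>}"

definition lower_faces :: "int \<Rightarrow> nat set set" where
  "lower_faces q = {\<sigma> \<in> faces K q. matched n t \<sigma> \<and> match_vertex n t \<sigma> \<notin> \<sigma>}"

lemma card_faces_split:
  "card (faces K q) = card (critical_faces q) + card (upper_faces q) + card (lower_faces q)"
proof -
  have "faces K q = critical_faces q \<union> upper_faces q \<union> lower_faces q"
    by (auto simp: critical_faces_def upper_faces_def lower_faces_def)
  moreover have "finite (faces K q)" using finite_K by (simp add: faces_def)
  ultimately have "finite (critical_faces q)" "finite (upper_faces q)" "finite (lower_faces q)"
    by (auto intro: finite_subset)
  moreover have "critical_faces q \<inter> upper_faces q = {}" "(critical_faces q \<union> upper_faces q) \<inter> lower_faces q = {}"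
    by (auto simp: critical_faces_def upper_faces_def lower_faces_def)
  ultimately show ?thesis using \<open>faces K q = _\<close> by (simp add: card_Un_disjoint)
qed

lemma card_lower_faces: "card (lower_faces q) = card (upper_faces (q + 1))"
proof -
  let ?f = "\<lambda>\<sigma>. toggle \<sigma> (match_vertex n t \<sigma>)"
  have involution: "?f (?f \<sigma>) = \<sigma>" if "\<sigma> \<in> K" "matched n t \<sigma>" for \<sigma>
    using match_vertex_toggle[OF that] by simp
  have "?f ` upper_faces (q + 1) \<subseteq> lower_faces q"
  proof
    fix \<rho> assume "\<rho> \<in> ?f ` upper_faces (q + 1)"
    then obtain \<sigma> where \<sigma>: "\<sigma> \<in> K" "matched n t \<sigma>" "match_vertex n t \<sigma> \<in> \<sigma>" "int (card \<sigma>) = q + 2"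
      and \<rho>: "\<rho> = \<sigma> - {match_vertex n t \<sigma>}" by (auto simp: upper_faces_def faces_def toggle_mem)
    have "card \<rho> = card \<sigma> - 1" "card \<sigma> \<ge> 1"
      using \<rho> \<sigma>(3) finite_face[OF \<sigma>(1)] by (auto simp: Suc_le_eq card_gt_0_iff)
    then show "\<rho> \<in> lower_faces q"
      using match_vertex_toggle[OF \<sigma>(1,2)] \<sigma> \<rho> by (auto simp: lower_faces_def faces_def toggle_mem)
  qed
  moreover have "?f ` lower_faces q \<subseteq> upper_faces (q + 1)"
  proof
    fix \<rho> assume "\<rho> \<in> ?f ` lower_faces q"
    then obtain \<sigma> where \<sigma>: "\<sigma> \<in> K" "matched n t \<sigma>" "match_vertex n t \<sigma> \<notin> \<sigma>" "int (card \<sigma>) = q + 1"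
      and \<rho>: "\<rho> = insert (match_vertex n t \<sigma>) \<sigma>" by (auto simp: lower_faces_def faces_def toggle_not_mem)
    have "card \<rho> = card \<sigma> + 1" using \<rho> \<sigma>(3) finite_face[OF \<sigma>(1)] by simp
    then show "\<rho> \<in> upper_faces (q + 1)"
      using match_vertex_toggle[OF \<sigma>(1,2)] \<sigma> \<rho> by (auto simp: upper_faces_def faces_def toggle_not_mem)
  qed
  moreover have "\<forall>\<sigma>\<in>upper_faces (q + 1). ?f (?f \<sigma>) = \<sigma>" "\<forall>\<sigma>\<in>lower_faces q. ?f (?f \<sigma>) = \<sigma>"
    using involution by (auto simp: upper_faces_def lower_faces_def faces_def)
  ultimately have "bij_betw ?f (upper_faces (q + 1)) (lower_faces q)"
    by (intro bij_betw_byWitness[where f' = ?f]) auto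
  then show ?thesis by (simp add: bij_betw_same_card)
qed

lemma card_upper_faces_le:
  "card (upper_faces (q + 1)) \<le> chain.dim (boundaries K q :: (nat set \<Rightarrow> 'k::field) set)"
proof (rule card_le_dim_boundaries[where m = "match_vertex n t" and w = binary_weight])
  fix \<tau> \<tau>' assume "\<tau> \<in> upper_faces (q + 1)" "\<tau>' \<in> upper_faces (q + 1)" "\<tau> \<noteq> \<tau>'"
    and "\<tau>' - {match_vertex n t \<tau>'} \<subseteq> \<tau>"
  then show "binary_weight \<tau> < binary_weight \<tau>'"
    by (intro binary_weight_less_if_facet) (auto simp: upper_faces_def faces_def)
qed (auto simp: upper_faces_def)

lemma critical_faces_eq:
  "critical_faces q =
    (if (n mod (t + 1) = 0 \<or> n mod (t + 1) = t) \<and> int (card (critical_face n t)) = q + 1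
     then {critical_face n t} else {})"
proof (cases "(n mod (t + 1) = 0 \<or> n mod (t + 1) = t) \<and> int (card (critical_face n t)) = q + 1")
  case True
  have "critical_faces q = {critical_face n t}"
  proof (intro equalityI subsetI)
    fix \<sigma> assume "\<sigma> \<in> critical_faces q"
    then have "\<sigma> = critical_face n t"
      by (intro unmatched_eq_critical_face) (simp_all add: critical_faces_def faces_def)
    then show "\<sigma> \<in> {critical_face n t}" by simp
  next
    fix \<sigma> assume "\<sigma> \<in> {critical_face n t}"
    then show "\<sigma> \<in> critical_faces q"
      using True critical_face_unmatched critical_face_omega by (simp add: critical_faces_def faces_def)
  qed
  then show ?thesis using True by simp
next
  case False
  have "critical_faces q = {}"
  proof (rule equals0I)
    fix \<sigma> assume "\<sigma> \<in> critical_faces q"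
    then have \<sigma>: "\<sigma> \<in> K" "\<not> matched n t \<sigma>" "int (card \<sigma>) = q + 1"
      by (simp_all add: critical_faces_def faces_def)
    then have "\<sigma> = critical_face n t" by (intro unmatched_eq_critical_face)
    then show False using False unmatched_residue[OF \<sigma>(1,2)] \<sigma>(3) by simp
  qed
  then show ?thesis using False by simp
qed

lemma red_homology_dim_omega: "red_homology_dim TYPE('k::field) K p = card (critical_faces p)"
proof (rule red_homology_dim_eq_critical[where c = "\<lambda>q. card (critical_faces q)"
      and u = "\<lambda>q. card (upper_faces q)" and d = "int (card (critical_face n t)) - 1"])
  show "card (faces K q) = card (critical_faces q) + card (upper_faces q) + card (upper_faces (q + 1))" for q
    using card_faces_split[of q] card_lower_faces[of q] by linarith
  show "card (critical_faces q) = 0" if "q \<noteq> int (card (critical_face n t)) - 1" for q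
    using that by (simp add: critical_faces_eq)
qed (rule card_upper_faces_le)

end

theorem mainTheorem3:
  fixes n t :: nat and p :: int
  assumes "1 \<le> t" and "t \<le> n"
  shows "red_homology_dim TYPE('k::field) (omega n t) p =
    (if n mod (t + 1) = 0 then (if p + 2 = 2 * int n div (int t + 1) then 1 else 0)
     else if n mod (t + 1) = t then (if p + 3 = 2 * (int n + 1) div (int t + 1) then 1 else 0)
     else 0)"
proof -
  interpret omega_complex n t using assms by unfold_locales
  have dim: "red_homology_dim TYPE('k) (omega n t) p = card (critical_faces p)"
    by (rule red_homology_dim_omega)
  consider (zero) "n mod (t + 1) = 0" | (top) "n mod (t + 1) = t"
    | (other) "n mod (t + 1) \<noteq> 0" "n mod (t + 1) \<noteq> t" by blast
  then show ?thesis
  proof cases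
    case zero
    then have "p + 2 = 2 * int n div (int t + 1) \<longleftrightarrow> int (card (critical_face n t)) = p + 1"
      using card_critical_face_mod_0[OF assms zero] by linarith
    then show ?thesis using dim zero by (simp add: critical_faces_eq)
  next
    case top
    then have "p + 3 = 2 * (int n + 1) div (int t + 1) \<longleftrightarrow> int (card (critical_face n t)) = p + 1"
      using card_critical_face_mod_t[OF assms(1) top] by linarith
    then show ?thesis using dim top assms(1) by (simp add: critical_faces_eq)
  next
    case other
    then show ?thesis using dim by (simp add: critical_faces_eq)
  qed
qed

end
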